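(* Let $\mathcal{A}$ be a unital C*-algebra and $X$ a Hilbert $\mathcal{A}$-bimodule, full and finite projective as a right $\mathcal{A}$-module, with finite basis $\{u_1,\dots,u_n\}$, and $\sigma(T)=\sum_iu_iTu_i^*$ on $\mathcal{O}_X$. For $T\in\mathcal{A}'\cap\mathcal{O}_X$, $m\in\mathbb{N}$ and $x_1,\dots,x_m\in X$ we have $\sigma^m(T)x_1\cdots x_m=x_1\cdots x_mT$, and $\sigma^m(T)$ commutes with $\mathcal{K}_{\mathcal{A}}(X^{\otimes m})\subseteq\mathcal{O}_X$. In particular $\sigma(T)$ commutes with $\mathcal{A}\subseteq\mathcal{K}_{\mathcal{A}}(X_{\mathcal A})$, and $\sigma$ maps $\mathcal{A}'\cap\mathcal{O}_X$ into itself.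
   Context: A Hilbert $\mathcal{A}$-bimodule is a right Hilbert $\mathcal{A}$-module $X$ (inner product $(\cdot|\cdot)_{\mathcal{A}}$) with an injective $*$-homomorphism $\phi:\mathcal{A}\to\mathcal{L}_{\mathcal{A}}(X_{\mathcal{A}})$. A basis is a finite set $\{u_i\}$ with $x=\sum_iu_i(u_i|x)_{\mathcal{A}}$. $\mathcal{O}_X$ is the universal C*-algebra generated by a unital copy of $\mathcal{A}$ and elements $S_x$ ($x\in X$, linear in $x$) with $S_{xa}=S_xa$, $S_{\phi(a)x}=aS_x$, $S_x^*S_y=(x|y)_{\mathcal{A}}$, $\sum_iS_{u_i}S_{u_i}^*=I$; write $x$ for $S_x$. $X^{\otimes m}$ is the interior tensor power, and $\mathcal{K}_{\mathcal{A}}(X^{\otimes m})=\mathcal{L}_{\mathcal{A}}(X^{\otimes m})$ is identified with the closed span of $x_1\cdots x_my_m^*\cdots y_1^*$ ($x_i,y_i\in X$) in $\mathcal{O}_X$ via $\theta_{x_1\otimes\cdots\otimes x_m,y_1\otimes\cdots\otimes y_m}\mapsto x_1\cdots x_my_m^*\cdots y_1^*$; $\mathcal{A}$ sits in $\mathcal{K}_{\mathcal{A}}(X_{\mathcal A})$ via $\phi$. $\mathcal{A}'$ is the commutant of $\mathcal{A}$ in $\mathcal{O}_X$. *)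

theory Defs
  imports "HOL-Analysis.Analysis"
begin

text \<open>A unital C*-algebra, axiomatised on a real Banach algebra type 'o with an
 explicit complex scalar multiplication cs and involution st.\<close>

definition cstar_alg :: "(complex \<Rightarrow> 'o::{real_normed_algebra_1,banach} \<Rightarrow> 'o) \<Rightarrow> ('o \<Rightarrow> 'o) \<Rightarrow> bool"
  where "cstar_alg cs st \<longleftrightarrow>
    (\<forall>r a. cs (complex_of_real r) a = scaleR r a) \<and>
    (\<forall>c a b. cs c (a + b) = cs c a + cs c b) \<and>
    (\<forall>c d a. cs (c + d) a = cs c a + cs d a) \<and>
    (\<forall>c d a. cs (c * d) a = cs c (cs d a)) \<and>
    (\<forall>c a b. cs c (a * b) = cs c a * b \<and> cs c (a * b) = a * cs c b) \<and>
    (\<forall>c a. norm (cs c a) = cmod c * norm a) \<and>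
    (\<forall>a b. st (a + b) = st a + st b) \<and>
    (\<forall>c a. st (cs c a) = cs (cnj c) (st a)) \<and>
    (\<forall>a. st (st a) = a) \<and>
    (\<forall>a b. st (a * b) = st b * st a) \<and>
    (\<forall>a. norm (st a * a) = (norm a)\<^sup>2)"

definition cspan :: "(complex \<Rightarrow> 'o::ab_group_add \<Rightarrow> 'o) \<Rightarrow> 'o set \<Rightarrow> 'o set"
  where "cspan cs S = {x. \<exists>ps. set (map snd ps) \<subseteq> S \<and>
                           x = sum_list (map (\<lambda>(c, s). cs c s) ps)}"

definition cstar_subalg :: "(complex \<Rightarrow> 'o::real_normed_algebra_1 \<Rightarrow> 'o) \<Rightarrow> ('o \<Rightarrow> 'o) \<Rightarrow> 'o set \<Rightarrow> bool"
  where "cstar_subalg cs st A \<longleftrightarrow>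
    1 \<in> A \<and> closed A \<and>
    (\<forall>a\<in>A. \<forall>b\<in>A. a + b \<in> A \<and> a * b \<in> A) \<and>
    (\<forall>c. \<forall>a\<in>A. cs c a \<in> A) \<and> (\<forall>a\<in>A. st a \<in> A)"

text \<open>X (identified with its image x \<mapsto> S_x) is a Hilbert A-bimodule sitting in O:
 a closed complex subspace with X A \<subseteq> X, A X \<subseteq> X (left action injective),
 inner product (x|y)_A = x* y \<in> A; full: the closed span of the inner products is A.\<close>
definition hilbert_bimodule_in ::
  "(complex \<Rightarrow> 'o::real_normed_algebra_1 \<Rightarrow> 'o) \<Rightarrow> ('o \<Rightarrow> 'o) \<Rightarrow> 'o set \<Rightarrow> 'o set \<Rightarrow> bool"
  where "hilbert_bimodule_in cs st A X \<longleftrightarrow>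
    0 \<in> X \<and> closed X \<and>
    (\<forall>x\<in>X. \<forall>y\<in>X. x + y \<in> X) \<and> (\<forall>c. \<forall>x\<in>X. cs c x \<in> X) \<and>
    (\<forall>x\<in>X. \<forall>a\<in>A. x * a \<in> X \<and> a * x \<in> X) \<and>
    (\<forall>x\<in>X. \<forall>y\<in>X. st x * y \<in> A) \<and>
    (\<forall>a\<in>A. (\<forall>x\<in>X. a * x = 0) \<longrightarrow> a = 0)"

definition full_module :: "(complex \<Rightarrow> 'o::real_normed_algebra_1 \<Rightarrow> 'o) \<Rightarrow> ('o \<Rightarrow> 'o) \<Rightarrow> 'o set \<Rightarrow> 'o set \<Rightarrow> bool"
  where "full_module cs st A X \<longleftrightarrow>
    closure (cspan cs {st x * y | x y. x \<in> X \<and> y \<in> X}) = A"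

definition cp_basis :: "('o::ring_1 \<Rightarrow> 'o) \<Rightarrow> 'o set \<Rightarrow> 'o list \<Rightarrow> bool"
  where "cp_basis st X us \<longleftrightarrow> set us \<subseteq> X \<and>
    (\<forall>x\<in>X. x = sum_list (map (\<lambda>u. u * (st u * x)) us)) \<and>
    sum_list (map (\<lambda>u. u * st u) us) = 1"

definition sigma_map :: "('o::ring_1 \<Rightarrow> 'o) \<Rightarrow> 'o list \<Rightarrow> 'o \<Rightarrow> 'o"
  where "sigma_map st us T = sum_list (map (\<lambda>u. u * T * st u) us)"

definition commutant :: "'o::ring_1 set \<Rightarrow> 'o set"
  where "commutant A = {t. \<forall>a\<in>A. t * a = a * t}"

text \<open>K_A(X^{\<otimes>m}) inside O: closed span of x_1..x_m y_m*..y_1*; for m = 0 it is A.\<close>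
definition compacts :: "(complex \<Rightarrow> 'o::real_normed_algebra_1 \<Rightarrow> 'o) \<Rightarrow> ('o \<Rightarrow> 'o) \<Rightarrow> 'o set \<Rightarrow> 'o set \<Rightarrow> nat
                        \<Rightarrow> 'o set"
  where "compacts cs st A X m = (if m = 0 then A else
    closure (cspan cs {prod_list xs * st (prod_list ys) | xs ys.
       length xs = m \<and> length ys = m \<and> set xs \<subseteq> X \<and> set ys \<subseteq> X}))"

end

theory Submission
  imports Defs
begin

text \<open>Expanding \<open>x = \<Sum>\<^sub>i u\<^sub>i (u\<^sub>i|x)\<close> and letting \<open>T \<in> \<A>'\<close> pass the coefficients
 \<open>(u\<^sub>i|x) \<in> \<A>\<close> gives \<open>\<sigma>(T) x = x T\<close>; applied to \<open>a u\<^sub>i \<in> X\<close> together with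
 \<open>\<Sum>\<^sub>i u\<^sub>i u\<^sub>i\<^sup>* = 1\<close> this shows \<open>\<sigma>(T) \<in> \<A>'\<close>. Iterating yields
 \<open>\<sigma>\<^sup>m(T) x\<^sub>1\<cdots>x\<^sub>m = x\<^sub>1\<cdots>x\<^sub>m T\<close>. Since \<open>\<A>\<close> is self-adjoint, \<open>T\<^sup>* \<in> \<A>'\<close> as well, and
 taking adjoints of the identity for \<open>T\<^sup>*\<close> gives \<open>y\<^sup>* \<sigma>\<^sup>m(T) = T y\<^sup>*\<close> for
 \<open>y = y\<^sub>1\<cdots>y\<^sub>m\<close>. Hence \<open>\<sigma>\<^sup>m(T)\<close> commutes with the generators \<open>x y\<^sup>*\<close> of
 \<open>\<K>\<^sub>\<A>(X\<^sup>\<otimes>\<^sup>m)\<close>, and so with their closed linear span.\<close>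

lemma commutant_cspan:
  assumes cs_mult: "\<And>c a b. cs c (a * b) = cs c a * b \<and> cs c (a * b) = a * cs c b"
    and S: "S \<in> commutant G"
  shows "S \<in> commutant (cspan cs G)"
  unfolding commutant_def
proof (intro CollectI ballI)
  fix k assume "k \<in> cspan cs G"
  then obtain ps where ps: "set (map snd ps) \<subseteq> G"
    and k: "k = sum_list (map (\<lambda>(c, g). cs c g) ps)"
    unfolding cspan_def by auto
  from ps have "S * sum_list (map (\<lambda>(c, g). cs c g) ps) = sum_list (map (\<lambda>(c, g). cs c g) ps) * S"
  proof (induction ps)
    case Nil
    then show ?case by simp
  next
    case (Cons p ps)
    obtain c g where p: "p = (c, g)" by force
    with Cons.prems S have "S * g = g * S" by (auto simp: commutant_def)
    then have "S * cs c g = cs c g * S" by (metis cs_mult)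
    with Cons p show ?case by (simp add: distrib_left distrib_right)
  qed
  with k show "S * k = k * S" by simp
qed

lemma commutant_closure:
  fixes S :: "'o::real_normed_algebra_1"
  assumes "S \<in> commutant G"
  shows "S \<in> commutant (closure G)"
proof -
  have "closed {k. S * k = k * S}"
    by (rule closed_Collect_eq) (intro continuous_intros)+
  then have "closure G \<subseteq> {k. S * k = k * S}"
    using assms by (intro closure_minimal) (auto simp: commutant_def)
  then show ?thesis by (auto simp: commutant_def)
qed

lemma cstar_alg_star:
  assumes "cstar_alg cs st"
  shows star_add: "st (a + b) = st a + st b"
    and star_mult: "st (a * b) = st b * st a"
    and star_star: "st (st a) = a"
  using assms unfolding cstar_alg_def by auto

lemma star_sum_list:
  assumes "cstar_alg cs st"
  shows "st (sum_list xs) = sum_list (map st xs)"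
proof -
  have "st 0 = 0" using star_add[OF assms, of 0 0] by simp
  then show ?thesis by (induction xs) (simp_all add: star_add[OF assms])
qed

lemma star_in_commutant:
  assumes C: "cstar_alg cs st" and A: "cstar_subalg cs st A" and T: "T \<in> commutant A"
  shows "st T \<in> commutant A"
  unfolding commutant_def
proof (intro CollectI ballI)
  fix a assume "a \<in> A"
  with A have "st a \<in> A" by (simp add: cstar_subalg_def)
  with T have "st (T * st a) = st (st a * T)" by (simp add: commutant_def)
  then show "st T * a = a * st T" by (simp add: star_mult[OF C] star_star[OF C])
qed

lemma star_sigma_map:
  assumes "cstar_alg cs st"
  shows "st (sigma_map st us S) = sigma_map st us (st S)"
  unfolding sigma_map_def
  by (simp add: star_sum_list[OF assms] star_mult[OF assms] star_star[OF assms] o_def mult.assoc)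

lemma star_funpow_sigma_map:
  assumes "cstar_alg cs st"
  shows "st ((sigma_map st us ^^ m) S) = (sigma_map st us ^^ m) (st S)"
  by (induction m) (simp_all add: star_sigma_map[OF assms])

lemma sigma_map_mult_elem:
  assumes B: "cp_basis st X us" and H: "hilbert_bimodule_in cs st A X"
    and S: "S \<in> commutant A" and x: "x \<in> X"
  shows "sigma_map st us S * x = x * S"
proof -
  have us: "set us \<subseteq> X" and x_expand: "x = sum_list (map (\<lambda>u. u * (st u * x)) us)"
    using B x unfolding cp_basis_def by auto
  have "sigma_map st us S * x = sum_list (map (\<lambda>u. u * S * st u * x) us)"
    unfolding sigma_map_def by (simp add: sum_list_mult_const o_def)
  also have "\<dots> = sum_list (map (\<lambda>u. u * (st u * x) * S) us)"
  proof (intro arg_cong[where f = sum_list] map_cong refl)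
    fix u assume "u \<in> set us"
    with H us x have "st u * x \<in> A" by (auto simp: hilbert_bimodule_in_def)
    with S show "u * S * st u * x = u * (st u * x) * S"
      by (simp add: commutant_def mult.assoc)
  qed
  also have "\<dots> = x * S"
    by (subst (2) x_expand) (simp add: sum_list_mult_const o_def)
  finally show ?thesis .
qed

lemma sigma_map_in_commutant:
  assumes B: "cp_basis st X us" and H: "hilbert_bimodule_in cs st A X"
    and S: "S \<in> commutant A"
  shows "sigma_map st us S \<in> commutant A"
  unfolding commutant_def
proof (intro CollectI ballI)
  fix a assume a: "a \<in> A"
  let ?\<sigma>S = "sigma_map st us S"
  have us: "set us \<subseteq> X" and one: "sum_list (map (\<lambda>u. u * st u) us) = 1"
    using B unfolding cp_basis_def by auto
  have "a * ?\<sigma>S = sum_list (map (\<lambda>u. a * u * S * st u) us)"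
    unfolding sigma_map_def by (simp add: sum_list_const_mult o_def mult.assoc)
  also have "\<dots> = sum_list (map (\<lambda>u. ?\<sigma>S * a * (u * st u)) us)"
  proof (intro arg_cong[where f = sum_list] map_cong refl)
    fix u assume "u \<in> set us"
    with H us a have "a * u \<in> X" by (auto simp: hilbert_bimodule_in_def)
    then have "?\<sigma>S * (a * u) = a * u * S" by (rule sigma_map_mult_elem[OF B H S])
    then show "a * u * S * st u = ?\<sigma>S * a * (u * st u)" by (metis mult.assoc)
  qed
  also have "\<dots> = ?\<sigma>S * a"
    by (subst sum_list_const_mult) (simp add: one)
  finally show "?\<sigma>S * a = a * ?\<sigma>S" by simp
qed

lemma funpow_sigma_map_in_commutant:
  assumes "cp_basis st X us" and "hilbert_bimodule_in cs st A X" and "S \<in> commutant A"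
  shows "(sigma_map st us ^^ m) S \<in> commutant A"
  by (induction m) (simp_all add: assms sigma_map_in_commutant[OF assms(1,2)])

lemma funpow_sigma_map_mult_prod_list:
  assumes B: "cp_basis st X us" and H: "hilbert_bimodule_in cs st A X"
    and S: "S \<in> commutant A" and xs: "set xs \<subseteq> X"
  shows "(sigma_map st us ^^ length xs) S * prod_list xs = prod_list xs * S"
  using xs
proof (induction xs)
  case Nil
  then show ?case by simp
next
  case (Cons x xs)
  let ?S = "(sigma_map st us ^^ length xs) S"
  have "(sigma_map st us ^^ length (x # xs)) S * prod_list (x # xs)
      = sigma_map st us ?S * x * prod_list xs"
    by (simp add: mult.assoc)
  also have "\<dots> = x * ?S * prod_list xs"
    using sigma_map_mult_elem[OF B H funpow_sigma_map_in_commutant[OF B H S]] Cons.prems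
    by simp
  also have "\<dots> = x * prod_list xs * S"
    using Cons by (simp add: mult.assoc)
  finally show ?case by simp
qed

lemma star_prod_list_mult_funpow_sigma_map:
  assumes C: "cstar_alg cs st" and A: "cstar_subalg cs st A"
    and B: "cp_basis st X us" and H: "hilbert_bimodule_in cs st A X"
    and T: "T \<in> commutant A" and ys: "set ys \<subseteq> X"
  shows "st (prod_list ys) * (sigma_map st us ^^ length ys) T = T * st (prod_list ys)"
proof -
  have "(sigma_map st us ^^ length ys) (st T) * prod_list ys = prod_list ys * st T"
    using funpow_sigma_map_mult_prod_list[OF B H star_in_commutant[OF C A T] ys] .
  then have "st ((sigma_map st us ^^ length ys) (st T) * prod_list ys) = st (prod_list ys * st T)"
    by simp
  then show ?thesis
    by (simp add: star_mult[OF C] star_star[OF C] star_funpow_sigma_map[OF C])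
qed

lemma funpow_sigma_map_in_commutant_compacts:
  assumes C: "cstar_alg cs st" and A: "cstar_subalg cs st A"
    and B: "cp_basis st X us" and H: "hilbert_bimodule_in cs st A X"
    and T: "T \<in> commutant A"
  shows "(sigma_map st us ^^ m) T \<in> commutant (compacts cs st A X m)"
proof (cases "m = 0")
  case True
  with T show ?thesis by (simp add: compacts_def)
next
  case False
  let ?S = "(sigma_map st us ^^ m) T"
  let ?G = "{prod_list xs * st (prod_list ys) | xs ys.
     length xs = m \<and> length ys = m \<and> set xs \<subseteq> X \<and> set ys \<subseteq> X}"
  have "?S \<in> commutant ?G"
    unfolding commutant_def
  proof (intro CollectI ballI)
    fix g assume "g \<in> ?G"
    then obtain xs ys where g: "g = prod_list xs * st (prod_list ys)"
      and len: "length xs = m" "length ys = m" and sets: "set xs \<subseteq> X" "set ys \<subseteq> X"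
      by blast
    have "?S * prod_list xs = prod_list xs * T"
      using funpow_sigma_map_mult_prod_list[OF B H T sets(1)] len(1) by simp
    moreover have "st (prod_list ys) * ?S = T * st (prod_list ys)"
      using star_prod_list_mult_funpow_sigma_map[OF C A B H T sets(2)] len(2) by simp
    ultimately show "?S * g = g * ?S"
      unfolding g by (metis mult.assoc)
  qed
  moreover have "\<And>c a b. cs c (a * b) = cs c a * b \<and> cs c (a * b) = a * cs c b"
    using C unfolding cstar_alg_def by blast
  ultimately have "?S \<in> commutant (closure (cspan cs ?G))"
    by (intro commutant_closure commutant_cspan)
  with False show ?thesis by (simp add: compacts_def)
qed

theorem lemma3p2:
  fixes cs :: "complex \<Rightarrow> 'o::{real_normed_algebra_1,banach} \<Rightarrow> 'o" and st :: "'o \<Rightarrow> 'o"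
    and A X :: "'o set" and us :: "'o list" and T :: 'o
  assumes "cstar_alg cs st"
    and "cstar_subalg cs st A"
    and "hilbert_bimodule_in cs st A X"
    and "full_module cs st A X"
    and "cp_basis st X us"
    and "T \<in> commutant A"
  shows "(\<forall>m xs. length xs = m \<and> set xs \<subseteq> X \<longrightarrow>
            (sigma_map st us ^^ m) T * prod_list xs = prod_list xs * T)
       \<and> (\<forall>m. \<forall>k\<in>compacts cs st A X m.
            (sigma_map st us ^^ m) T * k = k * (sigma_map st us ^^ m) T)
       \<and> (\<forall>a\<in>A. sigma_map st us T * a = a * sigma_map st us T)
       \<and> sigma_map st us T \<in> commutant A"
proof -
  note C = assms(1) and Sub = assms(2) and H = assms(3) and B = assms(5) and T = assms(6)
  have "sigma_map st us T \<in> commutant A"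
    by (rule sigma_map_in_commutant[OF B H T])
  moreover have "\<forall>m. (sigma_map st us ^^ m) T \<in> commutant (compacts cs st A X m)"
    using funpow_sigma_map_in_commutant_compacts[OF C Sub B H T] by blast
  ultimately show ?thesis
    using funpow_sigma_map_mult_prod_list[OF B H T] by (auto simp: commutant_def)
qed

end
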